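(* Let $k,n$ be positive integers and $\tilde n\le n$ a positive real parameter. For every $\mathsf{Path}_k$-join tree $T$ and every $\mathsf{Path}_k$-pathset $\mathcal A$, \[\chi_T(\mathcal A)\ge\tilde n^{\Psi(T)}\cdot\mu(\mathcal A).\]
   Context: Graphs are finite simple graphs without isolated vertices; $\emptyset$ is the empty graph. $\mathsf{Path}_{\mathbb Z}$ has vertex set $\mathbb Z$ and edges $\{i-1,i\}$; $\mathsf{Path}_k$ is its subgraph with vertices $0,\dots,k$ and edges $\{i-1,i\}$, $1\le i\le k$. $\Delta(G)$ = number of connected components; $G\ominus F$ = union of components of $G$ sharing no vertex with $F$; $\Delta(G\mid F):=\Delta(G\ominus F)$; $\vec\Delta(H_1,\dots,H_r)=\sum_l\Delta(H_l\ominus(H_1\cup\dots\cup H_{l-1}))$. Join trees: for $G\subseteq\mathsf{Path}_k$, a $G$-join tree is a finite rooted binary tree (each non-leaf has an ordered left and right child) with nodes labeled by subgraphs of $G$: leaves by single-edge subgraphs of $G$ or $\emptyset$, each non-leaf by the union of its children's labels, the root by $G$. $T_1\cup T_2$ is the join tree with a new root whose left subtree is $T_1$ and right subtree $T_2$. For a $G$-join tree $T$ and a root-to-leaf path $b_1,\dots,b_\ell$, let $B_j$ ($j<\ell$) be the label of the child of $b_j$ other than $b_{j+1}$ and $B_\ell$ the label of leaf $b_\ell$; $\{B_1,\dots,B_\ell\}$ is a $T$-branch covering. $\Psi(T)$ is the maximum of $\vec\Delta(C_1,\dots,C_r)$ over all $T$-branch coverings $\mathcal C$ and all enumerations $C_1,\dots,C_r$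 (without repetition) of $\mathcal C$. Relations and pathsets: a $G$-relation is a set $\mathcal A\subseteq[n]^{V(G)}$. $\mathcal A\bowtie\mathcal B=\{\gamma\in[n]^{V(G)\cup V(H)}:\gamma_{V(G)}\in\mathcal A,\ \gamma_{V(H)}\in\mathcal B\}$ for a $G$-relation $\mathcal A$ and $H$-relation $\mathcal B$. $\mu(\mathcal A)=|\mathcal A|/n^{|V(G)|}$; for a graph $F$ with $I=V(F)\cap V(G)$, $\mu(\mathcal A\mid F)=\max_{\beta\in[n]^{V(F)}}|\{\alpha\in\mathcal A:\alpha_I=\beta_I\}|/n^{|V(G)\setminus V(F)|}$. A $G$-pathset is a $G$-relation $\mathcal A$ with $\mu(\mathcal A\mid F)\le(1/\tilde n)^{\Delta(G\mid F)}$ for all $F\subseteq\mathsf{Path}_k$; $\mathscr P_G$ denotes the set of $G$-pathsets. Pathset complexity: for a $G$-join tree $T$ and $\mathcal A\in\mathscr P_G$: if $T$ is a single node, $\chi_T(\mathcal A)=0$ if $G=\emptyset$ or $\mathcal A=\emptyset$ and $1$ otherwise; if $T=T_1\cup T_2$ with $T_i$ a $G_i$-join tree, $\chi_T(\mathcal A)$ is the minimum, over finite families $\{(\mathcal A_i,\mathcal B_i,\mathcal C_i)\}_i\subseteq\mathscr P_G\times\mathscr P_{G_1}\times\mathscr P_{G_2}$ with $\mathcal A_i\subseteq\mathcal B_i\bowtie\mathcal C_i$ and $\mathcal A\subseteq\bigcup_i\mathcal A_i$, of $\sum_i\max\{\chi_{T_1}(\mathcal B_i),\chi_{T_2}(\mathcal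 C_i)\}$. *)

theory Defs
  imports Complex_Main "HOL-Library.FuncSet"
begin

text \<open>A subgraph of Path_Z (finite, no isolated vertices) is represented by the set of
  integers i such that the edge {i-1,i} belongs to it. The empty graph is {}.\<close>

type_synonym pgraph = "int set"

definition Path :: "nat \<Rightarrow> pgraph" where
  "Path k = {1..int k}"

definition verts :: "pgraph \<Rightarrow> int set" where
  "verts G = (\<Union>i\<in>G. {i - 1, i})"

definition padj :: "pgraph \<Rightarrow> (int \<times> int) set" where
  "padj G = {(u, v). \<exists>i\<in>G. (u = i - 1 \<and> v = i) \<or> (u = i \<and> v = i - 1)}"

definition comp_of :: "pgraph \<Rightarrow> int \<Rightarrow> int set" where
  "comp_of G v = (padj G)\<^sup>* `` {v}"

definition ncomp :: "pgraph \<Rightarrow> nat" where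
  "ncomp G = card (comp_of G ` verts G)"

definition gminus :: "pgraph \<Rightarrow> pgraph \<Rightarrow> pgraph" where
  "gminus G F = {i \<in> G. comp_of G i \<inter> verts F = {}}"

definition ncomp_rel :: "pgraph \<Rightarrow> pgraph \<Rightarrow> nat" where
  "ncomp_rel G F = ncomp (gminus G F)"

definition vec_ncomp :: "pgraph list \<Rightarrow> nat" where
  "vec_ncomp Hs = (\<Sum>l<length Hs. ncomp (gminus (Hs ! l) (\<Union> (set (take l Hs)))))"

datatype jtree = JLeaf pgraph | JNode jtree jtree

primrec jlabel :: "jtree \<Rightarrow> pgraph" where
  "jlabel (JLeaf E) = E"
| "jlabel (JNode T1 T2) = jlabel T1 \<union> jlabel T2"

primrec leaves_ok :: "jtree \<Rightarrow> bool" where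
  "leaves_ok (JLeaf E) = (E = {} \<or> (\<exists>i. E = {i}))"
| "leaves_ok (JNode T1 T2) = (leaves_ok T1 \<and> leaves_ok T2)"

definition join_tree :: "pgraph \<Rightarrow> jtree \<Rightarrow> bool" where
  "join_tree G T = (leaves_ok T \<and> jlabel T = G)"

text \<open>Lists (B_1,...,B_l) obtained from root-to-leaf paths.\<close>
primrec branch_lists :: "jtree \<Rightarrow> pgraph list set" where
  "branch_lists (JLeaf E) = {[E]}"
| "branch_lists (JNode T1 T2) =
     {jlabel T2 # bs | bs. bs \<in> branch_lists T1} \<union> {jlabel T1 # bs | bs. bs \<in> branch_lists T2}"

definition branch_coverings :: "jtree \<Rightarrow> pgraph set set" where
  "branch_coverings T = set ` branch_lists T"

definition Psi :: "jtree \<Rightarrow> nat" where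
  "Psi T = Max {vec_ncomp Cs | Cs. \<exists>C\<in>branch_coverings T. distinct Cs \<and> set Cs = C}"

definition assigns :: "nat \<Rightarrow> int set \<Rightarrow> (int \<Rightarrow> nat) set" where
  "assigns n V = PiE V (\<lambda>_. {1..n})"

definition is_relation :: "nat \<Rightarrow> pgraph \<Rightarrow> (int \<Rightarrow> nat) set \<Rightarrow> bool" where
  "is_relation n G A = (A \<subseteq> assigns n (verts G))"

definition rjoin :: "nat \<Rightarrow> pgraph \<Rightarrow> (int \<Rightarrow> nat) set \<Rightarrow> pgraph \<Rightarrow> (int \<Rightarrow> nat) set
    \<Rightarrow> (int \<Rightarrow> nat) set" where
  "rjoin n G A H B = {\<gamma> \<in> assigns n (verts G \<union> verts H).
      restrict \<gamma> (verts G) \<in> A \<and> restrict \<gamma> (verts H) \<in> B}"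

definition mu :: "nat \<Rightarrow> pgraph \<Rightarrow> (int \<Rightarrow> nat) set \<Rightarrow> real" where
  "mu n G A = real (card A) / real n ^ card (verts G)"

definition mu_cond :: "nat \<Rightarrow> pgraph \<Rightarrow> (int \<Rightarrow> nat) set \<Rightarrow> pgraph \<Rightarrow> real" where
  "mu_cond n G A F =
     (let I = verts F \<inter> verts G in
      Max ((\<lambda>\<beta>. real (card {\<alpha> \<in> A. restrict \<alpha> I = restrict \<beta> I})
                 / real n ^ card (verts G - verts F)) ` assigns n (verts F)))"

definition pathset :: "nat \<Rightarrow> nat \<Rightarrow> real \<Rightarrow> pgraph \<Rightarrow> (int \<Rightarrow> nat) set \<Rightarrow> bool" where
  "pathset k n nt G A = (is_relation n G A \<and>
     (\<forall>F. F \<subseteq> Path k \<longrightarrow> mu_cond n G A F \<le> (1 / nt) ^ ncomp_rel G F))"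

primrec chi :: "nat \<Rightarrow> nat \<Rightarrow> real \<Rightarrow> jtree \<Rightarrow> (int \<Rightarrow> nat) set \<Rightarrow> nat" where
  "chi k n nt (JLeaf E) = (\<lambda>A. if E = {} \<or> A = {} then 0 else 1)"
| "chi k n nt (JNode T1 T2) = (\<lambda>A. Inf
     {sum_list (map (\<lambda>(A', B, C). max (chi k n nt T1 B) (chi k n nt T2 C)) fam) | fam.
        (\<forall>(A', B, C) \<in> set fam.
            pathset k n nt (jlabel T1 \<union> jlabel T2) A' \<and>
            pathset k n nt (jlabel T1) B \<and> pathset k n nt (jlabel T2) C \<and>
            A' \<subseteq> rjoin n (jlabel T1) B (jlabel T2) C)
        \<and> A \<subseteq> (\<Union>(A', B, C) \<in> set fam. A')})"

end

theory Submission
  imports Defs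
begin

text \<open>
  Fix a root-to-leaf branch of \<open>T\<close> with labels \<open>B\<^sub>1, \<dots>, B\<^sub>l\<close>. Unfolding an optimal
  decomposition witnessing \<open>chi T A\<close> along this branch covers \<open>A\<close> by at most \<open>chi T A\<close>
  relations \<open>X\<close> whose projection to every \<open>B\<^sub>j\<close> is a \<open>B\<^sub>j\<close>-pathset: at a node, the side
  containing the branch is covered by induction and the cover is pulled back along the join,
  while the projection to the other child stays inside a pathset.
  For such an \<open>X\<close> and any enumeration \<open>C\<^sub>1, \<dots>, C\<^sub>r\<close> of the branch covering, counting
  \<open>X\<close> fibre by fibre over \<open>C\<^sub>1 \<union> \<dots> \<union> C\<^sub>i\<^sub>-\<^sub>1\<close> and applying the pathset bound for
  \<open>C\<^sub>i\<close> conditioned on that union gives \<open>card X \<le> n ^ |V(Path k)| * (1 / nt) ^ vec_ncomp [C\<^sub>1, \<dots>, C\<^sub>r]\<close>.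
  Choosing the covering and enumeration that attain \<open>Psi T\<close> and summing over the cover gives
  \<open>card A \<le> chi T A * n ^ |V(Path k)| * (1 / nt) ^ Psi T\<close>.
\<close>

definition proj :: "pgraph \<Rightarrow> (int \<Rightarrow> nat) set \<Rightarrow> (int \<Rightarrow> nat) set" where
  "proj H X = (\<lambda>x. restrict x (verts H)) ` X"

lemma verts_Un: "verts (G \<union> H) = verts G \<union> verts H"
  unfolding verts_def by blast

lemma verts_mono: "G \<subseteq> H \<Longrightarrow> verts G \<subseteq> verts H"
  unfolding verts_def by blast

lemma verts_empty [simp]: "verts {} = {}"
  unfolding verts_def by simp

lemma finite_verts: "finite G \<Longrightarrow> finite (verts G)"
  unfolding verts_def by simp

lemma finite_Path: "finite (Path k)"
  unfolding Path_def by simp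

lemma finite_assigns: "finite V \<Longrightarrow> finite (assigns n V)"
  unfolding assigns_def by (simp add: finite_PiE)

lemma assigns_nonempty: "n > 0 \<Longrightarrow> assigns n V \<noteq> {}"
  unfolding assigns_def by (simp add: PiE_eq_empty_iff)

lemma assigns_empty: "assigns n {} = {\<lambda>_. undefined}"
  unfolding assigns_def by simp

lemma restrict_in_assigns: "x \<in> assigns n V \<Longrightarrow> W \<subseteq> V \<Longrightarrow> restrict x W \<in> assigns n W"
  unfolding assigns_def by (auto simp: PiE_iff)

lemma restrict_assigns_id: "x \<in> assigns n V \<Longrightarrow> restrict x V = x"
  unfolding assigns_def by simp

lemma assigns_eq_by_restrict:
  assumes "\<gamma> \<in> assigns n (V \<union> W)" "\<delta> \<in> assigns n (V \<union> W)"
    and "restrict \<gamma> V = restrict \<delta> V" "restrict \<gamma> W = restrict \<delta> W"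
  shows "\<gamma> = \<delta>"
proof (rule ext)
  fix x
  consider "x \<in> V" | "x \<in> W" | "x \<notin> V \<union> W" by blast
  then show "\<gamma> x = \<delta> x"
  proof cases
    case 1
    then show ?thesis using fun_cong[OF assms(3), of x] by simp
  next
    case 2
    then show ?thesis using fun_cong[OF assms(4), of x] by simp
  next
    case 3
    have "\<gamma> \<in> extensional (V \<union> W)" "\<delta> \<in> extensional (V \<union> W)"
      using assms(1,2) unfolding assigns_def PiE_def by blast+
    with 3 show ?thesis by (metis extensional_arb)
  qed
qed

lemma proj_subset_assigns:
  assumes "X \<subseteq> assigns n V" "verts H \<subseteq> V"
  shows "proj H X \<subseteq> assigns n (verts H)"
  unfolding proj_def image_subset_iff using assms restrict_in_assigns by blast

lemma proj_id: "X \<subseteq> assigns n (verts G) \<Longrightarrow> proj G X = X"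
proof -
  assume "X \<subseteq> assigns n (verts G)"
  then have "restrict x (verts G) = x" if "x \<in> X" for x
    using that restrict_assigns_id by blast
  then show "proj G X = X"
    unfolding proj_def by simp
qed

lemma proj_proj: "verts H \<subseteq> verts G \<Longrightarrow> proj H (proj G X) = proj H X"
  unfolding proj_def image_image by (simp add: Int_absorb1 inf.commute)

lemma pathset_subset_assigns: "pathset k n nt G A \<Longrightarrow> A \<subseteq> assigns n (verts G)"
  unfolding pathset_def is_relation_def by simp

lemma mu_cond_ge:
  assumes "finite F" "\<beta> \<in> assigns n (verts F)"
  shows "real (card {\<alpha> \<in> A. restrict \<alpha> (verts F \<inter> verts G) = restrict \<beta> (verts F \<inter> verts G)})
           / real n ^ card (verts G - verts F) \<le> mu_cond n G A F"
  unfolding mu_cond_def Let_def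
  by (rule Max_ge) (use assms in \<open>auto intro: finite_assigns finite_verts\<close>)

lemma mu_cond_leI:
  assumes "finite F" "n > 0"
    and "\<And>\<beta>. \<beta> \<in> assigns n (verts F) \<Longrightarrow>
      real (card {\<alpha> \<in> A. restrict \<alpha> (verts F \<inter> verts G) = restrict \<beta> (verts F \<inter> verts G)})
        / real n ^ card (verts G - verts F) \<le> c"
  shows "mu_cond n G A F \<le> c"
  unfolding mu_cond_def Let_def
  using assms by (subst Max_le_iff) (auto intro: finite_assigns finite_verts simp: assigns_nonempty)

lemma mu_cond_mono:
  assumes "n > 0" "finite F" "finite B" "A \<subseteq> B"
  shows "mu_cond n G A F \<le> mu_cond n G B F"
proof (rule mu_cond_leI[OF assms(2,1)])
  fix \<beta> assume \<beta>: "\<beta> \<in> assigns n (verts F)"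
  let ?I = "verts F \<inter> verts G"
  have "card {\<alpha> \<in> A. restrict \<alpha> ?I = restrict \<beta> ?I} \<le> card {\<alpha> \<in> B. restrict \<alpha> ?I = restrict \<beta> ?I}"
    using assms(3,4) by (intro card_mono) auto
  then have "real (card {\<alpha> \<in> A. restrict \<alpha> ?I = restrict \<beta> ?I}) / real n ^ card (verts G - verts F)
      \<le> real (card {\<alpha> \<in> B. restrict \<alpha> ?I = restrict \<beta> ?I}) / real n ^ card (verts G - verts F)"
    by (intro divide_right_mono) simp_all
  also have "\<dots> \<le> mu_cond n G B F"
    by (rule mu_cond_ge[OF assms(2) \<beta>])
  finally show "real (card {\<alpha> \<in> A. restrict \<alpha> ?I = restrict \<beta> ?I}) / real n ^ card (verts G - verts F)
      \<le> mu_cond n G B F" .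
qed

lemma pathset_mono:
  assumes "n > 0" "finite G" "pathset k n nt G B" "A \<subseteq> B"
  shows "pathset k n nt G A"
  unfolding pathset_def
proof (intro conjI allI impI)
  have B: "B \<subseteq> assigns n (verts G)"
    using assms(3) by (rule pathset_subset_assigns)
  with assms(4) show "is_relation n G A"
    unfolding is_relation_def by blast
  fix F assume F: "F \<subseteq> Path k"
  have "finite F" "finite B"
    using finite_subset[OF F finite_Path] finite_subset[OF B finite_assigns[OF finite_verts[OF assms(2)]]]
    by auto
  then have "mu_cond n G A F \<le> mu_cond n G B F"
    using assms(1,4) by (intro mu_cond_mono)
  also have "\<dots> \<le> (1 / nt) ^ ncomp_rel G F"
    using assms(3) F unfolding pathset_def by blast
  finally show "mu_cond n G A F \<le> (1 / nt) ^ ncomp_rel G F" .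
qed

lemma verts_gminus_subset: "verts (gminus G F) \<subseteq> verts G - verts F"
proof
  fix v assume "v \<in> verts (gminus G F)"
  then obtain i where i: "i \<in> G" "comp_of G i \<inter> verts F = {}" "v = i - 1 \<or> v = i"
    unfolding verts_def gminus_def by auto
  then have "(i, v) \<in> (padj G)\<^sup>*"
  proof (cases "v = i")
    case False
    with i have "(i, v) \<in> padj G"
      unfolding padj_def by blast
    then show ?thesis by (rule r_into_rtrancl)
  qed simp
  then have "v \<in> comp_of G i"
    unfolding comp_of_def by simp
  moreover have "v \<in> verts G"
    using i(1,3) unfolding verts_def by blast
  ultimately show "v \<in> verts G - verts F"
    using i(2) by blast
qed

lemma ncomp_gminus_le:
  assumes "finite G"
  shows "ncomp (gminus G F) \<le> card (verts G - verts F)"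
proof -
  have fin: "finite (verts G - verts F)"
    using assms by (simp add: finite_verts)
  have "ncomp (gminus G F) \<le> card (verts (gminus G F))"
    unfolding ncomp_def by (rule card_image_le) (rule finite_subset[OF verts_gminus_subset fin])
  also have "\<dots> \<le> card (verts G - verts F)"
    by (rule card_mono[OF fin verts_gminus_subset])
  finally show ?thesis .
qed

lemma pathset_singleton:
  assumes "n > 0" "nt > 0" "nt \<le> real n" "finite G" "\<alpha> \<in> assigns n (verts G)"
  shows "pathset k n nt G {\<alpha>}"
  unfolding pathset_def
proof (intro conjI allI impI)
  show "is_relation n G {\<alpha>}"
    using assms(5) unfolding is_relation_def by simp
  fix F assume F: "F \<subseteq> Path k"
  define m where "m = card (verts G - verts F)"
  have c_le_m: "ncomp_rel G F \<le> m"
    unfolding ncomp_rel_def m_def by (rule ncomp_gminus_le[OF assms(4)])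
  have bound: "(1 / real n) ^ m \<le> (1 / nt) ^ ncomp_rel G F"
  proof (cases "nt \<ge> 1")
    case True
    have "(1 / real n) ^ m \<le> (1 / nt) ^ m"
      using assms(2,3) by (intro power_mono) (auto simp: divide_simps)
    also have "\<dots> \<le> (1 / nt) ^ ncomp_rel G F"
      using True c_le_m by (intro power_decreasing) auto
    finally show ?thesis .
  next
    case False
    have "(1 / real n) ^ m \<le> 1"
      using assms(1) by (simp add: power_le_one)
    also have "1 \<le> (1 / nt) ^ ncomp_rel G F"
      using False assms(2) by (simp add: one_le_power)
    finally show ?thesis .
  qed
  show "mu_cond n G {\<alpha>} F \<le> (1 / nt) ^ ncomp_rel G F"
  proof (rule mu_cond_leI[OF finite_subset[OF F finite_Path] assms(1)])
    fix \<beta>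
    let ?S = "{\<alpha>' \<in> {\<alpha>}. restrict \<alpha>' (verts F \<inter> verts G) = restrict \<beta> (verts F \<inter> verts G)}"
    have "card ?S \<le> 1"
      by (rule order_trans[OF card_mono[of "{\<alpha>}"]]) auto
    then have "real (card ?S) / real n ^ m \<le> 1 / real n ^ m"
      by (simp add: divide_right_mono)
    also have "\<dots> \<le> (1 / nt) ^ ncomp_rel G F"
      using bound by (simp add: power_one_over)
    finally show "real (card ?S) / real n ^ card (verts G - verts F) \<le> (1 / nt) ^ ncomp_rel G F"
      unfolding m_def .
  qed
qed

lemma pathset_empty_graph:
  assumes "n > 0" "nt > 0" "nt \<le> real n"
  shows "pathset k n nt {} (proj {} X)"
proof (rule pathset_mono[OF assms(1) finite.emptyI])
  show "pathset k n nt {} {\<lambda>_. undefined}"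
    using assms by (intro pathset_singleton) (simp_all add: assigns_empty)
  show "proj {} X \<subseteq> {\<lambda>_. undefined}"
    unfolding proj_def by auto
qed

section \<open>The chain rule\<close>

lemma card_fiber_le_mu_cond:
  assumes "n > 0" "finite G" "finite H"
    and X: "X \<subseteq> assigns n (verts G \<union> verts H)" and \<beta>: "\<beta> \<in> assigns n (verts G)"
  shows "real (card {\<gamma> \<in> X. restrict \<gamma> (verts G) = \<beta>})
    \<le> real n ^ card (verts H - verts G) * mu_cond n H (proj H X) G"
proof -
  define I where "I = verts G \<inter> verts H"
  let ?fiber = "{\<gamma> \<in> X. restrict \<gamma> (verts G) = \<beta>}"
  let ?S = "{\<alpha> \<in> proj H X. restrict \<alpha> I = restrict \<beta> I}"
  have "finite X"
    by (rule finite_subset[OF X finite_assigns]) (simp add: finite_verts assms(2,3))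
  then have "finite (proj H X)"
    unfolding proj_def by simp
  then have "card ?fiber \<le> card ?S"
  proof (intro card_inj_on_le[where f = "\<lambda>\<gamma>. restrict \<gamma> (verts H)"])
    show "inj_on (\<lambda>\<gamma>. restrict \<gamma> (verts H)) ?fiber"
    proof (rule inj_onI)
      fix \<gamma> \<delta>
      assume "\<gamma> \<in> ?fiber" "\<delta> \<in> ?fiber" "restrict \<gamma> (verts H) = restrict \<delta> (verts H)"
      with X show "\<gamma> = \<delta>"
        by (intro assigns_eq_by_restrict[of \<gamma> n "verts G" "verts H" \<delta>]) auto
    qed
    show "(\<lambda>\<gamma>. restrict \<gamma> (verts H)) ` ?fiber \<subseteq> ?S"
      unfolding proj_def I_def by (auto simp: fun_eq_iff)
  qed simp
  then have "real (card ?fiber) / real n ^ card (verts H - verts G)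
      \<le> real (card ?S) / real n ^ card (verts H - verts G)"
    by (intro divide_right_mono) simp_all
  also have "\<dots> \<le> mu_cond n H (proj H X) G"
    unfolding I_def by (rule mu_cond_ge[OF assms(2) \<beta>])
  finally show ?thesis
    using assms(1) by (simp add: divide_le_eq mult.commute)
qed

lemma card_le_card_image_mult:
  assumes "finite X" "\<And>y. y \<in> f ` X \<Longrightarrow> real (card {x \<in> X. f x = y}) \<le> b"
  shows "real (card X) \<le> real (card (f ` X)) * b"
proof -
  have "X = (\<Union>y\<in>f ` X. {x \<in> X. f x = y})"
    by auto
  also have "card \<dots> = (\<Sum>y\<in>f ` X. card {x \<in> X. f x = y})"
    by (rule card_UN_disjoint) (use assms(1) in auto)
  finally have "card X = (\<Sum>y\<in>f ` X. card {x \<in> X. f x = y})" .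
  then have "real (card X) = (\<Sum>y\<in>f ` X. real (card {x \<in> X. f x = y}))"
    by simp
  also have "\<dots> \<le> real (card (f ` X)) * b"
    using assms(2) by (rule sum_bounded_above)
  finally show ?thesis .
qed

lemma vec_ncomp_snoc:
  "vec_ncomp (Hs @ [H]) = vec_ncomp Hs + ncomp (gminus H (\<Union>(set Hs)))"
  unfolding vec_ncomp_def by (simp add: nth_append)

lemma card_le_card_proj_mult:
  assumes "n > 0" "nt > 0" "G \<subseteq> Path k" "H \<subseteq> Path k"
    and X: "X \<subseteq> assigns n (verts G \<union> verts H)" and H: "pathset k n nt H (proj H X)"
  shows "real (card X)
    \<le> real (card (proj G X)) * (real n ^ card (verts H - verts G) * (1 / nt) ^ ncomp (gminus H G))"
proof -
  have fin: "finite G" "finite H"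
    using assms(3,4) finite_subset finite_Path by blast+
  have "real (card {\<gamma> \<in> X. restrict \<gamma> (verts G) = \<beta>})
      \<le> real n ^ card (verts H - verts G) * (1 / nt) ^ ncomp (gminus H G)"
    if "\<beta> \<in> proj G X" for \<beta>
  proof -
    have "\<beta> \<in> assigns n (verts G)"
      using that proj_subset_assigns[OF X] by blast
    then have "real (card {\<gamma> \<in> X. restrict \<gamma> (verts G) = \<beta>})
        \<le> real n ^ card (verts H - verts G) * mu_cond n H (proj H X) G"
      using assms(1) fin X by (intro card_fiber_le_mu_cond)
    also have "\<dots> \<le> real n ^ card (verts H - verts G) * (1 / nt) ^ ncomp (gminus H G)"
      using H assms(3) unfolding pathset_def ncomp_rel_def by (intro mult_left_mono) simp_all
    finally show ?thesis .
  qed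
  moreover have "finite X"
    by (rule finite_subset[OF X finite_assigns]) (use fin in \<open>simp add: finite_verts\<close>)
  ultimately show ?thesis
    unfolding proj_def by (intro card_le_card_image_mult) auto
qed

lemma card_le_chain:
  assumes "n > 0" "nt > 0"
  shows "\<Union>(set Hs) \<subseteq> Path k \<Longrightarrow> X \<subseteq> assigns n (verts (\<Union>(set Hs))) \<Longrightarrow>
    \<forall>H\<in>set Hs. pathset k n nt H (proj H X) \<Longrightarrow>
    real (card X) \<le> real n ^ card (verts (\<Union>(set Hs))) * (1 / nt) ^ vec_ncomp Hs"
proof (induction Hs arbitrary: X rule: rev_induct)
  case Nil
  then have "X \<subseteq> {\<lambda>_. undefined}"
    by (simp add: assigns_empty)
  then have "card X \<le> 1"
    using card_mono[of "{\<lambda>_. undefined}" X] by simp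
  then show ?case
    unfolding vec_ncomp_def by simp
next
  case (snoc H Hs)
  define G where "G = \<Union>(set Hs)"
  define m where "m = card (verts H - verts G)"
  define c where "c = ncomp (gminus H G)"
  have G_H: "G \<subseteq> Path k" "H \<subseteq> Path k"
    using snoc.prems(1) unfolding G_def by auto
  have X: "X \<subseteq> assigns n (verts G \<union> verts H)"
    using snoc.prems(2) unfolding G_def by (simp add: verts_Un Un_commute)
  have "real (card (proj G X)) \<le> real n ^ card (verts G) * (1 / nt) ^ vec_ncomp Hs"
    unfolding G_def
  proof (rule snoc.IH)
    show "proj (\<Union>(set Hs)) X \<subseteq> assigns n (verts (\<Union>(set Hs)))"
      using X unfolding G_def by (rule proj_subset_assigns) simp
    have "proj H' (proj (\<Union>(set Hs)) X) = proj H' X" if "H' \<in> set Hs" for H'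
      using that by (intro proj_proj verts_mono) blast
    then show "\<forall>H'\<in>set Hs. pathset k n nt H' (proj H' (proj (\<Union>(set Hs)) X))"
      using snoc.prems(3) by simp
  qed (use G_H G_def in simp)
  moreover have "real (card X) \<le> real (card (proj G X)) * (real n ^ m * (1 / nt) ^ c)"
    unfolding m_def c_def using snoc.prems(3) by (intro card_le_card_proj_mult[OF assms G_H X]) simp
  moreover have "0 \<le> real n ^ m * (1 / nt) ^ c"
    using assms(2) by simp
  ultimately have "real (card X) \<le> real n ^ (card (verts G) + m) * (1 / nt) ^ (vec_ncomp Hs + c)"
    unfolding power_add by (smt (verit) mult.assoc mult.commute mult_right_mono)
  also have "card (verts G) + m = card (verts (\<Union>(set (Hs @ [H]))))"
  proof -
    have "finite (verts G)" "finite (verts H)"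
      using G_H finite_subset finite_Path finite_verts by blast+
    moreover have "verts (\<Union>(set (Hs @ [H]))) = verts G \<union> (verts H - verts G)"
      unfolding G_def by (auto simp: verts_Un)
    ultimately show ?thesis
      unfolding m_def by (simp only:) (intro card_Un_disjoint[symmetric], auto)
  qed
  finally show ?case
    unfolding c_def G_def by (simp add: vec_ncomp_snoc)
qed

definition coverable :: "nat \<Rightarrow> ('a set \<Rightarrow> bool) \<Rightarrow> 'a set \<Rightarrow> bool" where
  "coverable m P A \<longleftrightarrow> (\<exists>Xs. length Xs \<le> m \<and> A \<subseteq> \<Union>(set Xs) \<and> (\<forall>X\<in>set Xs. P X))"

lemma coverable_mono:
  assumes "coverable m P A" "A' \<subseteq> A" "m \<le> m'" "\<And>X. P X \<Longrightarrow> Q X"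
  shows "coverable m' Q A'"
  using assms unfolding coverable_def by (meson order_trans)

lemma coverable_UN_list:
  assumes "\<And>t. t \<in> set ts \<Longrightarrow> coverable (c t) P (S t)"
  shows "coverable (sum_list (map c ts)) P (\<Union>t\<in>set ts. S t)"
  using assms
proof (induction ts)
  case Nil
  show ?case
    unfolding coverable_def by (intro exI[of _ "[]"]) simp
next
  case (Cons t ts)
  obtain Xs where "length Xs \<le> c t" "S t \<subseteq> \<Union>(set Xs)" "\<forall>X\<in>set Xs. P X"
    using Cons.prems[of t] unfolding coverable_def by auto
  moreover obtain Ys where "length Ys \<le> sum_list (map c ts)" "(\<Union>t\<in>set ts. S t) \<subseteq> \<Union>(set Ys)"
    "\<forall>Y\<in>set Ys. P Y"
    using Cons unfolding coverable_def by auto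
  ultimately show ?case
    unfolding coverable_def by (intro exI[of _ "Xs @ Ys"]) auto
qed

lemma coverable_pullback:
  assumes "coverable m P B" "\<And>a. a \<in> A \<Longrightarrow> f a \<in> B" "\<And>X. P X \<Longrightarrow> Q {a \<in> A. f a \<in> X}"
  shows "coverable m Q A"
proof -
  obtain Xs where Xs: "length Xs \<le> m" "B \<subseteq> \<Union>(set Xs)" "\<forall>X\<in>set Xs. P X"
    using assms(1) unfolding coverable_def by auto
  show ?thesis
    unfolding coverable_def
  proof (intro exI[of _ "map (\<lambda>X. {a \<in> A. f a \<in> X}) Xs"] conjI)
    show "A \<subseteq> \<Union>(set (map (\<lambda>X. {a \<in> A. f a \<in> X}) Xs))"
      using assms(2) Xs(2) by fastforce
  qed (use Xs assms(3) in auto)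
qed

lemma card_le_coverable:
  assumes "coverable m P A" "0 \<le> b" "\<And>X. P X \<Longrightarrow> finite X \<and> real (card X) \<le> b"
  shows "real (card A) \<le> real m * b"
proof -
  obtain Xs where Xs: "length Xs \<le> m" "A \<subseteq> \<Union>(set Xs)" "\<forall>X\<in>set Xs. P X"
    using assms(1) unfolding coverable_def by auto
  have "finite (\<Union>(set Xs))"
    using Xs(3) assms(3) by auto
  then have "real (card A) \<le> real (card (\<Union>(set Xs)))"
    using Xs(2) by (simp add: card_mono)
  also have "\<dots> \<le> (\<Sum>X\<in>set Xs. real (card X))"
    using card_Union_le_sum_card[of "set Xs"] by (simp flip: of_nat_sum)
  also have "\<dots> \<le> real (card (set Xs)) * b"
    using Xs(3) assms(3) by (intro sum_bounded_above) auto
  also have "\<dots> \<le> real m * b"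
    using card_length[of Xs] Xs(1) assms(2) by (intro mult_right_mono) simp_all
  finally show ?thesis .
qed

lemma branch_lists_nonempty: "branch_lists T \<noteq> {}"
  by (induction T) auto

lemma finite_branch_lists: "finite (branch_lists T)"
proof (induction T)
  case (JNode T1 T2)
  have "branch_lists (JNode T1 T2) = (Cons (jlabel T2)) ` branch_lists T1 \<union> (Cons (jlabel T1)) ` branch_lists T2"
    by auto
  with JNode show ?case
    by simp
qed simp

lemma branch_list_subset_label: "bs \<in> branch_lists T \<Longrightarrow> H \<in> set bs \<Longrightarrow> H \<subseteq> jlabel T"
  by (induction T arbitrary: bs) fastforce+

lemma Union_branch_list: "bs \<in> branch_lists T \<Longrightarrow> \<Union>(set bs) = jlabel T"
  by (induction T arbitrary: bs) fastforce+

lemma Psi_attained: "\<exists>Cs bs. bs \<in> branch_lists T \<and> set Cs = set bs \<and> Psi T = vec_ncomp Cs"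
proof -
  define S where "S = {vec_ncomp Cs | Cs. \<exists>C\<in>branch_coverings T. distinct Cs \<and> set Cs = C}"
  define U where "U = \<Union>(set ` branch_lists T)"
  have "finite U"
    unfolding U_def using finite_branch_lists by simp
  have "S \<subseteq> vec_ncomp ` {Cs. set Cs \<subseteq> U \<and> length Cs \<le> card U}"
  proof
    fix v assume "v \<in> S"
    then obtain Cs bs where Cs: "v = vec_ncomp Cs" "bs \<in> branch_lists T" "distinct Cs" "set Cs = set bs"
      unfolding S_def branch_coverings_def by auto
    then have "set Cs \<subseteq> U"
      unfolding U_def by auto
    moreover have "length Cs \<le> card U"
      using Cs(3) card_mono[OF \<open>finite U\<close> \<open>set Cs \<subseteq> U\<close>] by (simp add: distinct_card)
    ultimately show "v \<in> vec_ncomp ` {Cs. set Cs \<subseteq> U \<and> length Cs \<le> card U}"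
      using Cs(1) by blast
  qed
  then have "finite S"
    using finite_lists_length_le[OF \<open>finite U\<close>] finite_subset by blast
  moreover obtain bs where "bs \<in> branch_lists T"
    using branch_lists_nonempty by blast
  then have "vec_ncomp (remdups bs) \<in> S"
    unfolding S_def branch_coverings_def by auto
  ultimately have "Psi T \<in> S"
    unfolding Psi_def S_def[symmetric] by (intro Max_in) auto
  then show ?thesis
    unfolding S_def branch_coverings_def by auto
qed

definition join_cover ::
    "nat \<Rightarrow> nat \<Rightarrow> real \<Rightarrow> pgraph \<Rightarrow> pgraph \<Rightarrow> (int \<Rightarrow> nat) set
      \<Rightarrow> ((int \<Rightarrow> nat) set \<times> (int \<Rightarrow> nat) set \<times> (int \<Rightarrow> nat) set) list \<Rightarrow> bool" where
  "join_cover k n nt G1 G2 A fam \<longleftrightarrow>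
     (\<forall>(A', B, C)\<in>set fam. pathset k n nt (G1 \<union> G2) A' \<and> pathset k n nt G1 B \<and>
        pathset k n nt G2 C \<and> A' \<subseteq> rjoin n G1 B G2 C)
     \<and> A \<subseteq> (\<Union>(A', B, C)\<in>set fam. A')"

text \<open>Singletons are pathsets only because \<open>nt \<le> n\<close>; this is what makes the infimum
  defining \<open>chi\<close> range over a nonempty set.\<close>

lemma join_cover_singletons:
  assumes "n > 0" "nt > 0" "nt \<le> real n" "finite G1" "finite G2" "pathset k n nt (G1 \<union> G2) A"
  shows "\<exists>fam. join_cover k n nt G1 G2 A fam"
proof -
  have A: "A \<subseteq> assigns n (verts G1 \<union> verts G2)"
    using pathset_subset_assigns[OF assms(6)] by (simp add: verts_Un)
  then have "finite A"
    using finite_subset finite_assigns finite_verts assms(4,5) by (metis finite_UnI)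
  then obtain xs where xs: "set xs = A"
    using finite_list by blast
  define fam where "fam = map (\<lambda>\<alpha>. ({\<alpha>}, {restrict \<alpha> (verts G1)}, {restrict \<alpha> (verts G2)})) xs"
  have "pathset k n nt (G1 \<union> G2) {\<alpha>} \<and> pathset k n nt G1 {restrict \<alpha> (verts G1)} \<and>
      pathset k n nt G2 {restrict \<alpha> (verts G2)} \<and>
      {\<alpha>} \<subseteq> rjoin n G1 {restrict \<alpha> (verts G1)} G2 {restrict \<alpha> (verts G2)}" if "\<alpha> \<in> A" for \<alpha>
    using that A assms(1-5)
    by (auto intro!: pathset_singleton restrict_in_assigns simp: rjoin_def verts_Un)
  then have "join_cover k n nt G1 G2 A fam"
    unfolding join_cover_def fam_def xs[symmetric] by auto
  then show ?thesis ..
qed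

lemma chi_JNode_attained:
  assumes "n > 0" "nt > 0" "nt \<le> real n" "finite (jlabel T1 \<union> jlabel T2)"
    and "pathset k n nt (jlabel T1 \<union> jlabel T2) A"
  obtains fam where "join_cover k n nt (jlabel T1) (jlabel T2) A fam"
    and "chi k n nt (JNode T1 T2) A =
      sum_list (map (\<lambda>(A', B, C). max (chi k n nt T1 B) (chi k n nt T2 C)) fam)"
proof -
  let ?cost = "\<lambda>fam. sum_list (map (\<lambda>(A', B, C). max (chi k n nt T1 B) (chi k n nt T2 C)) fam)"
  define S where "S = {?cost fam | fam. join_cover k n nt (jlabel T1) (jlabel T2) A fam}"
  have "chi k n nt (JNode T1 T2) A = Inf S"
    unfolding S_def join_cover_def by simp
  moreover have "S \<noteq> {}"
    using join_cover_singletons[of n nt "jlabel T1" "jlabel T2" k A] assms unfolding S_def by auto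
  then have "Inf S \<in> S"
    by (rule Inf_nat_def1)
  ultimately show ?thesis
    using that unfolding S_def by auto
qed

section \<open>Unfolding \<open>chi\<close> along a branch\<close>

definition proj_pathsets :: "nat \<Rightarrow> nat \<Rightarrow> real \<Rightarrow> pgraph \<Rightarrow> pgraph list \<Rightarrow> (int \<Rightarrow> nat) set \<Rightarrow> bool" where
  "proj_pathsets k n nt G Hs X \<longleftrightarrow>
     X \<subseteq> assigns n (verts G) \<and> (\<forall>H\<in>set Hs. pathset k n nt H (proj H X))"

lemma rjoin_commute: "rjoin n G B H C = rjoin n H C G B"
  unfolding rjoin_def by (auto simp: Un_commute)

lemma proj_pathsets_rjoin:
  assumes "n > 0" "finite Go" "Y \<subseteq> rjoin n Gp B Go C" "pathset k n nt Go C"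
    and "\<forall>H\<in>set bs. pathset k n nt H (proj H Y)"
  shows "proj_pathsets k n nt (Gp \<union> Go) (Go # bs) Y"
proof -
  have "Y \<subseteq> assigns n (verts (Gp \<union> Go))"
    using assms(3) unfolding rjoin_def by (auto simp: verts_Un)
  moreover have "proj Go Y \<subseteq> C"
    using assms(3) unfolding rjoin_def proj_def by auto
  then have "pathset k n nt Go (proj Go Y)"
    by (rule pathset_mono[OF assms(1,2,4)])
  ultimately show ?thesis
    using assms(5) unfolding proj_pathsets_def by simp
qed

lemma pathset_proj_preimage:
  assumes "n > 0" "finite H" "H \<subseteq> G" "pathset k n nt H (proj H X)"
  shows "pathset k n nt H (proj H {\<gamma> \<in> Y. restrict \<gamma> (verts G) \<in> X})"
proof (rule pathset_mono[OF assms(1,2,4)])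
  have "proj H {\<gamma> \<in> Y. restrict \<gamma> (verts G) \<in> X} = proj H (proj G {\<gamma> \<in> Y. restrict \<gamma> (verts G) \<in> X})"
    using assms(3) by (intro proj_proj[symmetric] verts_mono)
  also have "\<dots> \<subseteq> proj H X"
    unfolding proj_def by blast
  finally show "proj H {\<gamma> \<in> Y. restrict \<gamma> (verts G) \<in> X} \<subseteq> proj H X" .
qed

lemma coverable_rjoin:
  assumes "n > 0" "nt > 0" "nt \<le> real n" "finite Gp" "finite Go"
    and A': "A' \<subseteq> rjoin n Gp B Go C" and C: "pathset k n nt Go C"
    and bs: "\<forall>H\<in>set bs. H \<subseteq> Gp"
    and cover_B: "Gp \<noteq> {} \<Longrightarrow> coverable mp (proj_pathsets k n nt Gp bs) B"
    and cover_C: "Gp = {} \<Longrightarrow> coverable mo (\<lambda>_. True) C"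
  shows "coverable (max mp mo) (proj_pathsets k n nt (Gp \<union> Go) (Go # bs)) A'"
proof (cases "Gp = {}")
  case True
  \<comment> \<open>\<open>chi\<close> of an empty-labelled subtree may vanish although \<open>B \<noteq> {}\<close>, so the cover comes from \<open>C\<close>.\<close>
  then have "\<forall>H\<in>set bs. pathset k n nt H (proj H Y)" for Y
    using bs pathset_empty_graph[OF assms(1-3)] by auto
  then have "coverable mo (proj_pathsets k n nt (Gp \<union> Go) (Go # bs)) A'"
    using A' by (intro coverable_pullback[OF cover_C[OF True], where f = "\<lambda>\<gamma>. restrict \<gamma> (verts Go)"]
        proj_pathsets_rjoin[OF assms(1,5) _ C]) (auto simp: rjoin_def)
  then show ?thesis
    by (rule coverable_mono) auto
next
  case False
  have "proj_pathsets k n nt (Gp \<union> Go) (Go # bs) {\<gamma> \<in> A'. restrict \<gamma> (verts Gp) \<in> X}"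
    if "proj_pathsets k n nt Gp bs X" for X
  proof (rule proj_pathsets_rjoin[OF assms(1,5) _ C])
    show "{\<gamma> \<in> A'. restrict \<gamma> (verts Gp) \<in> X} \<subseteq> rjoin n Gp B Go C"
      using A' by blast
    show "\<forall>H\<in>set bs. pathset k n nt H (proj H {\<gamma> \<in> A'. restrict \<gamma> (verts Gp) \<in> X})"
    proof
      fix H assume H: "H \<in> set bs"
      then have "H \<subseteq> Gp" "pathset k n nt H (proj H X)"
        using bs that unfolding proj_pathsets_def by auto
      then show "pathset k n nt H (proj H {\<gamma> \<in> A'. restrict \<gamma> (verts Gp) \<in> X})"
        using finite_subset[OF _ assms(4)] by (blast intro: pathset_proj_preimage[OF assms(1)])
    qed
  qed
  then have "coverable mp (proj_pathsets k n nt (Gp \<union> Go) (Go # bs)) A'"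
    using A' by (intro coverable_pullback[OF cover_B[OF False], where f = "\<lambda>\<gamma>. restrict \<gamma> (verts Gp)"])
      (auto simp: rjoin_def)
  then show ?thesis
    by (rule coverable_mono) auto
qed

definition branch_covers :: "nat \<Rightarrow> nat \<Rightarrow> real \<Rightarrow> jtree \<Rightarrow> bool" where
  "branch_covers k n nt T \<longleftrightarrow>
     (\<forall>A bs. jlabel T \<noteq> {} \<longrightarrow> pathset k n nt (jlabel T) A \<longrightarrow> bs \<in> branch_lists T \<longrightarrow>
        coverable (chi k n nt T A) (proj_pathsets k n nt (jlabel T) bs) A)"

lemma branch_coversD:
  "branch_covers k n nt T \<Longrightarrow> jlabel T \<noteq> {} \<Longrightarrow> pathset k n nt (jlabel T) A \<Longrightarrow>
    bs \<in> branch_lists T \<Longrightarrow> coverable (chi k n nt T A) (proj_pathsets k n nt (jlabel T) bs) A"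
  unfolding branch_covers_def by blast

lemma branch_covers_JLeaf: "branch_covers k n nt (JLeaf E)"
  unfolding branch_covers_def
proof (intro allI impI)
  fix A bs
  assume "jlabel (JLeaf E) \<noteq> {}" "pathset k n nt (jlabel (JLeaf E)) A" "bs \<in> branch_lists (JLeaf E)"
  moreover have "proj E A = A"
    using \<open>pathset k n nt (jlabel (JLeaf E)) A\<close> by (simp add: proj_id[OF pathset_subset_assigns])
  ultimately have "E \<noteq> {}" "bs = [E]" "proj_pathsets k n nt E bs A"
    using pathset_subset_assigns unfolding proj_pathsets_def by auto
  then show "coverable (chi k n nt (JLeaf E) A) (proj_pathsets k n nt (jlabel (JLeaf E)) bs) A"
    unfolding coverable_def
    by (cases "A = {}") (auto intro: exI[of _ "[]"] exI[of _ "[A]"])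
qed

lemma coverable_rjoin_subtrees:
  assumes "n > 0" "nt > 0" "nt \<le> real n" "finite (jlabel Tp)" "finite (jlabel To)"
    and "jlabel Tp \<union> jlabel To \<noteq> {}" "A' \<subseteq> rjoin n (jlabel Tp) B (jlabel To) C"
    and B: "pathset k n nt (jlabel Tp) B" and C: "pathset k n nt (jlabel To) C"
    and bsp: "bsp \<in> branch_lists Tp"
    and IH: "branch_covers k n nt Tp" "branch_covers k n nt To"
  shows "coverable (max (chi k n nt Tp B) (chi k n nt To C))
    (proj_pathsets k n nt (jlabel Tp \<union> jlabel To) (jlabel To # bsp)) A'"
proof (rule coverable_rjoin[OF assms(1-5,7) C])
  show "\<forall>H\<in>set bsp. H \<subseteq> jlabel Tp"
    using branch_list_subset_label bsp by blast
  show "coverable (chi k n nt Tp B) (proj_pathsets k n nt (jlabel Tp) bsp) B" if "jlabel Tp \<noteq> {}"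
    by (rule branch_coversD[OF IH(1) that B bsp])
  show "coverable (chi k n nt To C) (\<lambda>_. True) C" if "jlabel Tp = {}"
  proof -
    obtain bs' where "bs' \<in> branch_lists To"
      using branch_lists_nonempty by blast
    then have "coverable (chi k n nt To C) (proj_pathsets k n nt (jlabel To) bs') C"
      using branch_coversD[OF IH(2) _ C] that assms(6) by simp
    then show ?thesis
      by (rule coverable_mono) auto
  qed
qed

lemma branch_covers_JNode:
  assumes "n > 0" "nt > 0" "nt \<le> real n" "finite (jlabel T1 \<union> jlabel T2)"
    and IH: "branch_covers k n nt T1" "branch_covers k n nt T2"
  shows "branch_covers k n nt (JNode T1 T2)"
  unfolding branch_covers_def
proof (intro allI impI)
  fix A bs
  assume nonempty: "jlabel (JNode T1 T2) \<noteq> {}" and A: "pathset k n nt (jlabel (JNode T1 T2)) A"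
    and bs: "bs \<in> branch_lists (JNode T1 T2)"
  obtain fam where fam: "join_cover k n nt (jlabel T1) (jlabel T2) A fam"
    and chi_eq: "chi k n nt (JNode T1 T2) A =
      sum_list (map (\<lambda>(A', B, C). max (chi k n nt T1 B) (chi k n nt T2 C)) fam)"
    using chi_JNode_attained[OF assms(1-4)] A by auto
  have "coverable (max (chi k n nt T1 B) (chi k n nt T2 C))
      (proj_pathsets k n nt (jlabel (JNode T1 T2)) bs) A'" if "(A', B, C) \<in> set fam" for A' B C
  proof -
    have props: "pathset k n nt (jlabel T1) B" "pathset k n nt (jlabel T2) C"
      "A' \<subseteq> rjoin n (jlabel T1) B (jlabel T2) C"
      using fam that unfolding join_cover_def by auto
    note side = coverable_rjoin_subtrees[OF assms(1-3)]
    from bs consider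
        (left) bs1 where "bs = jlabel T2 # bs1" "bs1 \<in> branch_lists T1"
      | (right) bs2 where "bs = jlabel T1 # bs2" "bs2 \<in> branch_lists T2"
      by auto
    then show ?thesis
    proof cases
      case left
      then show ?thesis
        using side[of T1 T2 A' B C k bs1] props assms(4) nonempty IH by simp
    next
      case right
      then show ?thesis
        using side[of T2 T1 A' C B k bs2] props assms(4) nonempty IH
        by (simp add: rjoin_commute Un_commute max.commute)
    qed
  qed
  then have "coverable (chi k n nt (JNode T1 T2) A) (proj_pathsets k n nt (jlabel (JNode T1 T2)) bs)
      (\<Union>(A', B, C)\<in>set fam. A')"
    unfolding chi_eq by (intro coverable_UN_list) auto
  moreover have "A \<subseteq> (\<Union>(A', B, C)\<in>set fam. A')"
    using fam unfolding join_cover_def by blast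
  ultimately show "coverable (chi k n nt (JNode T1 T2) A) (proj_pathsets k n nt (jlabel (JNode T1 T2)) bs) A"
    by (rule coverable_mono) auto
qed

lemma branch_covers:
  assumes "n > 0" "nt > 0" "nt \<le> real n" "finite (jlabel T)"
  shows "branch_covers k n nt T"
  using assms(4)
proof (induction T)
  case (JNode T1 T2)
  then show ?case
    using branch_covers_JNode[OF assms(1-3)] by simp
qed (rule branch_covers_JLeaf)

theorem lemma6p10:
  fixes k n :: nat and nt :: real and T :: jtree and A :: "(int \<Rightarrow> nat) set"
  assumes "k > 0" and "n > 0" and "nt > 0" and "nt \<le> real n"
    and "join_tree (Path k) T"
    and "pathset k n nt (Path k) A"
  shows "real (chi k n nt T A) \<ge> nt ^ Psi T * mu n (Path k) A"
proof -
  have label: "jlabel T = Path k" "finite (jlabel T)" "jlabel T \<noteq> {}"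
    using assms(1,5) finite_Path unfolding join_tree_def Path_def by auto
  obtain Cs bs where bs: "bs \<in> branch_lists T" "set Cs = set bs" and Psi: "Psi T = vec_ncomp Cs"
    using Psi_attained by blast
  have cover: "coverable (chi k n nt T A) (proj_pathsets k n nt (Path k) bs) A"
    using branch_coversD[OF branch_covers[OF assms(2-4) label(2)] label(3)] assms(6) bs(1) label(1) by simp
  define b where "b = real n ^ card (verts (Path k)) * (1 / nt) ^ Psi T"
  have "finite X \<and> real (card X) \<le> b" if "proj_pathsets k n nt (Path k) bs X" for X
  proof
    have X: "X \<subseteq> assigns n (verts (Path k))"
      using that unfolding proj_pathsets_def by simp
    then show "finite X"
      by (rule finite_subset[OF _ finite_assigns[OF finite_verts[OF finite_Path]]])
    have "\<Union>(set Cs) = Path k"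
      using Union_branch_list[OF bs(1)] bs(2) label(1) by simp
    then show "real (card X) \<le> b"
      unfolding b_def Psi using card_le_chain[OF assms(2,3), of Cs k X] X that bs(2)
      unfolding proj_pathsets_def by auto
  qed
  then have "real (card A) \<le> real (chi k n nt T A) * b"
    using assms(3) by (intro card_le_coverable[OF cover]) (simp_all add: b_def)
  then show ?thesis
    using assms(2,3) unfolding mu_def b_def by (simp add: field_simps power_one_over)
qed

end
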